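(* Let $\mathcal{S}$ be a square-free staged tree and let $u$ be a (possibly singleton) stage of $\mathcal{S}$ with situations $s_q$, $q\in Q_u$. Suppose each $s_q$ is the root of a subtree $\mathcal{T}_q$ and that the collection $\{\mathcal{T}_q\}_{q\in Q_u}$ is conditionally saturated. Let $\mathcal{S}'$ be the staged tree obtained by the resize operator that contracts each $\mathcal{T}_q$ into a floret $\mathcal{F}_q$, $q\in Q_u$. Let $\alpha>0$, let $\mathcal{D}=(N_\lambda)_{\lambda\in\Lambda(\mathcal{S})}$ be a complete data sample on $\mathcal{S}$ and $\mathcal{D}'$ the sample on $\mathcal{S}'$ obtained by transferring each $N_\lambda$ to the corresponding root-to-leaf path of $\mathcal{S}'$. Then $\mathrm{BDepu}(\mathcal{S},\mathcal{D};\alpha)=\mathrm{BDepu}(\mathcal{S}',\mathcal{D}';\alpha)$.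
   Context: An event tree is a finite directed rooted tree whose edges are directed away from the root; nodes with no outgoing edges are leaves, all other nodes are situations. A staged tree $\mathcal{S}$ is an event tree together with a partition of its situations into stages $u_1,\dots,u_J$ such that all situations in $u_j$ have the same number $r_j$ of outgoing edges, labelled $1,\dots,r_j$ at each situation of $u_j$; the $k$-th edge of every situation in $u_j$ carries the same conditional transition probability $\theta_{jk}$. A staged tree is square-free if no two situations on the same root-to-leaf path lie in the same stage. $\Lambda(\mathcal{S})$ is the set of root-to-leaf paths and, for an edge $e$, $\Lambda(e)$ is the set of root-to-leaf paths containing $e$. A subtree $\mathcal{T}$ rooted at a situation $s$ consists of $s$, some of its descendants and the edges between them, such that with every non-subleaf node it contains all of its outgoing edges; its subleaves are its nodes having no outgoing edges within $\mathcal{T}$. The collection $\{\mathcal{T}_q\}_{q\in Q_u}$ (with $\mathcal{T}_q$ rooted at $s_q\in u$) is conditionally saturated if the $\mathcal{T}_q$ are identical (same topology, with corresponding non-subleaf situations in the same stage and corresponding edges carrying the same labels), no stage is repeated inside any single $\mathcal{T}_q$ apart from through the correspondence, and the stages of the non-root, non-subleaf situations of the $\mathcal{T}_q$ contain no situations outside $\bigcup_q\mathcal{T}_q$. The resize operator contracts each $\mathcal{T}_q$ into a floret $\mathcal{F}_q$: $s_q$ is given one outgoing edge for each root-to-subleaf path of $\mathcal{T}_q$, entering the corresponding subleaf (with everything below unchanged), with transition probability the product of the transition probabilities along that path; the roots $s_q$, $q\in Q_u$, remain together in one stage with these new edges. This induces a bijection between root-to-leaf paths of $\mathcal{S}$ and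 of $\mathcal{S}'$. A complete data sample $\mathcal{D}$ assigns to each root-to-leaf path $\lambda$ a number $N_\lambda\ge 0$ of units. For stage $u_j$, $n_{jk}$ is the number of units whose path passes through the $k$-th outgoing edge of some situation in $u_j$, $\overline{n}_j=\sum_k n_{jk}$. The BDepu score with imaginary sample size $\alpha>0$ is $$\mathrm{BDepu}(\mathcal{S},\mathcal{D};\alpha)=\prod_{j=1}^{J}\left[\frac{\Gamma(\overline{\alpha}_j)}{\Gamma(\overline{\alpha}_j+\overline{n}_j)}\prod_{k=1}^{r_j}\frac{\Gamma(\alpha_{jk}+n_{jk})}{\Gamma(\alpha_{jk})}\right],\quad \alpha_{jk}=\frac{\alpha}{|\Lambda(\mathcal{S})|}\sum_{m=1}^{h_j}|\Lambda(e^m_{jk})|,\quad \overline{\alpha}_j=\sum_{k=1}^{r_j}\alpha_{jk},$$ where $h_j$ is the number of situations in $u_j$ and $e^m_{jk}$ is the $k$-th outgoing edge of the $m$-th situation of $u_j$. *)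

theory Defs
  imports "HOL-Analysis.Gamma_Function" "HOL-Library.List_Lexorder"
begin

text \<open>Representation of a staged tree: a finite vertex set V, a root r, a child map ch
  (the k-th outgoing edge of v, k = 0,1,..., enters ch v ! k; so the paper's label k+1
  corresponds to list index k) and a stage-label function st on situations; the stages
  are the fibres of st on the situations.\<close>

definition tree_edges :: "'v set \<Rightarrow> ('v \<Rightarrow> 'v list) \<Rightarrow> ('v \<times> 'v) set" where
  "tree_edges V ch = {(a, b). a \<in> V \<and> b \<in> set (ch a)}"

definition event_tree :: "'v set \<Rightarrow> 'v \<Rightarrow> ('v \<Rightarrow> 'v list) \<Rightarrow> bool" where
  "event_tree V r ch \<longleftrightarrow>
     finite V \<and> r \<in> V \<and>
     (\<forall>v\<in>V. set (ch v) \<subseteq> V \<and> distinct (ch v) \<and> r \<notin> set (ch v)) \<and>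
     (\<forall>w\<in>V. w \<noteq> r \<longrightarrow> (\<exists>!v. v \<in> V \<and> w \<in> set (ch v))) \<and>
     (\<forall>w\<in>V. (r, w) \<in> (tree_edges V ch)\<^sup>*) \<and>
     (\<forall>v\<in>V. (v, v) \<notin> (tree_edges V ch)\<^sup>+)"

definition is_situation :: "'v set \<Rightarrow> ('v \<Rightarrow> 'v list) \<Rightarrow> 'v \<Rightarrow> bool" where
  "is_situation V ch v \<longleftrightarrow> v \<in> V \<and> ch v \<noteq> []"

definition leaves :: "'v set \<Rightarrow> ('v \<Rightarrow> 'v list) \<Rightarrow> 'v set" where
  "leaves V ch = {l \<in> V. ch l = []}"

definition stage :: "'v set \<Rightarrow> ('v \<Rightarrow> 'v list) \<Rightarrow> ('v \<Rightarrow> 's) \<Rightarrow> 's \<Rightarrow> 'v set" where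
  "stage V ch st j = {v. is_situation V ch v \<and> st v = j}"

definition stage_labels :: "'v set \<Rightarrow> ('v \<Rightarrow> 'v list) \<Rightarrow> ('v \<Rightarrow> 's) \<Rightarrow> 's set" where
  "stage_labels V ch st = st ` {v. is_situation V ch v}"

definition staged_tree :: "'v set \<Rightarrow> 'v \<Rightarrow> ('v \<Rightarrow> 'v list) \<Rightarrow> ('v \<Rightarrow> 's) \<Rightarrow> bool" where
  "staged_tree V r ch st \<longleftrightarrow> event_tree V r ch \<and>
     (\<forall>v w. is_situation V ch v \<and> is_situation V ch w \<and> st v = st w
        \<longrightarrow> length (ch v) = length (ch w))"

definition square_free :: "'v set \<Rightarrow> ('v \<Rightarrow> 'v list) \<Rightarrow> ('v \<Rightarrow> 's) \<Rightarrow> bool" where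
  "square_free V ch st \<longleftrightarrow>
     (\<forall>v w. is_situation V ch v \<and> is_situation V ch w \<and> st v = st w
        \<longrightarrow> (v, w) \<notin> (tree_edges V ch)\<^sup>+)"

fun nodeAt :: "('v \<Rightarrow> 'v list) \<Rightarrow> 'v \<Rightarrow> nat list \<Rightarrow> 'v" where
  "nodeAt ch v [] = v"
| "nodeAt ch v (k # ks) = nodeAt ch (ch v ! k) ks"

text \<open>A subtree rooted at s is described by the set P of label sequences (from s) of its
  non-subleaf nodes; its nodes are these together with all their children, and its
  subleaves are the children not in P.\<close>
definition valid_subtree :: "'v set \<Rightarrow> ('v \<Rightarrow> 'v list) \<Rightarrow> 'v \<Rightarrow> nat list set \<Rightarrow> bool" where
  "valid_subtree V ch s P \<longleftrightarrow>
     [] \<in> P \<and>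
     (\<forall>p\<in>P. is_situation V ch (nodeAt ch s p)) \<and>
     (\<forall>p k. p @ [k] \<in> P \<longrightarrow> p \<in> P \<and> k < length (ch (nodeAt ch s p)))"

definition subtree_nodes :: "('v \<Rightarrow> 'v list) \<Rightarrow> 'v \<Rightarrow> nat list set \<Rightarrow> 'v set" where
  "subtree_nodes ch s P =
     nodeAt ch s ` P \<union> {nodeAt ch s (p @ [k]) | p k. p \<in> P \<and> k < length (ch (nodeAt ch s p))}"

definition subleaf_pos :: "('v \<Rightarrow> 'v list) \<Rightarrow> 'v \<Rightarrow> nat list set \<Rightarrow> nat list set" where
  "subleaf_pos ch s P = {p @ [k] | p k. p \<in> P \<and> k < length (ch (nodeAt ch s p)) \<and> p @ [k] \<notin> P}"

definition cond_saturated ::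
  "'v set \<Rightarrow> ('v \<Rightarrow> 'v list) \<Rightarrow> ('v \<Rightarrow> 's) \<Rightarrow> 's \<Rightarrow> ('v \<Rightarrow> nat list set) \<Rightarrow> bool" where
  "cond_saturated V ch st u T \<longleftrightarrow>
     (\<forall>s\<in>stage V ch st u. valid_subtree V ch s (T s)) \<and>
     \<comment> \<open>identical: same topology (w.r.t. labels) and corresponding situations in the same stage\<close>
     (\<forall>s\<in>stage V ch st u. \<forall>s'\<in>stage V ch st u. T s = T s' \<and>
        (\<forall>p\<in>T s. st (nodeAt ch s p) = st (nodeAt ch s' p))) \<and>
     \<comment> \<open>no stage repeated inside a single subtree\<close>
     (\<forall>s\<in>stage V ch st u. \<forall>p\<in>T s. \<forall>p'\<in>T s. p \<noteq> p'
        \<longrightarrow> st (nodeAt ch s p) \<noteq> st (nodeAt ch s p')) \<and>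
     \<comment> \<open>stages of non-root non-subleaf situations lie inside the union of the subtrees\<close>
     (\<forall>s\<in>stage V ch st u. \<forall>p\<in>T s. p \<noteq> [] \<longrightarrow>
        (\<forall>w. is_situation V ch w \<and> st w = st (nodeAt ch s p) \<longrightarrow>
           (\<exists>s'\<in>stage V ch st u. \<exists>p'\<in>T s'. w = nodeAt ch s' p')))"

text \<open>The resize operator: the non-root non-subleaf nodes of the subtrees are removed, and
  each root s gets one edge per root-to-subleaf path (ordered consistently across the stage
  by the lexicographic order of the label sequences), entering that subleaf.\<close>
definition resize_V ::
  "'v set \<Rightarrow> ('v \<Rightarrow> 'v list) \<Rightarrow> ('v \<Rightarrow> 's) \<Rightarrow> 's \<Rightarrow> ('v \<Rightarrow> nat list set) \<Rightarrow> 'v set" where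
  "resize_V V ch st u T =
     V - {nodeAt ch s p | s p. s \<in> stage V ch st u \<and> p \<in> T s \<and> p \<noteq> []}"

definition resize_ch ::
  "'v set \<Rightarrow> ('v \<Rightarrow> 'v list) \<Rightarrow> ('v \<Rightarrow> 's) \<Rightarrow> 's \<Rightarrow> ('v \<Rightarrow> nat list set) \<Rightarrow> 'v \<Rightarrow> 'v list" where
  "resize_ch V ch st u T v =
     (if v \<in> stage V ch st u
      then map (nodeAt ch v) (sorted_list_of_set (subleaf_pos ch v (T v)))
      else ch v)"

text \<open>Root-to-leaf paths correspond to leaves; a data sample N assigns counts to leaves.
  Edges: the k-th edge of v enters ch v ! k, and its root-to-leaf paths are the leaves below.\<close>
definition leaves_below :: "'v set \<Rightarrow> ('v \<Rightarrow> 'v list) \<Rightarrow> 'v \<Rightarrow> 'v set" where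
  "leaves_below V ch w = {l \<in> leaves V ch. (w, l) \<in> (tree_edges V ch)\<^sup>*}"

definition n_count :: "'v set \<Rightarrow> ('v \<Rightarrow> 'v list) \<Rightarrow> ('v \<Rightarrow> 's) \<Rightarrow> ('v \<Rightarrow> nat) \<Rightarrow> 's \<Rightarrow> nat \<Rightarrow> nat" where
  "n_count V ch st N j k =
     (\<Sum>l\<in>{l \<in> leaves V ch. \<exists>v\<in>stage V ch st j. l \<in> leaves_below V ch (ch v ! k)}. N l)"

definition alpha_jk :: "'v set \<Rightarrow> ('v \<Rightarrow> 'v list) \<Rightarrow> ('v \<Rightarrow> 's) \<Rightarrow> real \<Rightarrow> 's \<Rightarrow> nat \<Rightarrow> real" where
  "alpha_jk V ch st \<alpha> j k =
     \<alpha> / real (card (leaves V ch)) *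
       (\<Sum>v\<in>stage V ch st j. real (card (leaves_below V ch (ch v ! k))))"

definition stage_arity :: "'v set \<Rightarrow> ('v \<Rightarrow> 'v list) \<Rightarrow> ('v \<Rightarrow> 's) \<Rightarrow> 's \<Rightarrow> nat" where
  "stage_arity V ch st j = length (ch (SOME v. v \<in> stage V ch st j))"

definition BDepu ::
  "'v set \<Rightarrow> 'v \<Rightarrow> ('v \<Rightarrow> 'v list) \<Rightarrow> ('v \<Rightarrow> 's) \<Rightarrow> ('v \<Rightarrow> nat) \<Rightarrow> real \<Rightarrow> real" where
  "BDepu V r ch st N \<alpha> =
     (\<Prod>j\<in>stage_labels V ch st.
        (let rj = stage_arity V ch st j;
             a = alpha_jk V ch st \<alpha> j;
             n = (\<lambda>k. real (n_count V ch st N j k));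
             abar = (\<Sum>k<rj. a k);
             nbar = (\<Sum>k<rj. n k)
         in Gamma abar / Gamma (abar + nbar) * (\<Prod>k<rj. Gamma (a k + n k) / Gamma (a k))))"

end

theory Submission
  imports Defs
begin

text \<open>Conditional saturation makes the stage of the situations at a position p of the common
  subtree shape exactly the set of nodes at position p below the situations s of u, and
  square-freeness makes the subtrees rooted at these s disjoint.  Hence the imaginary counts
  a(q) and the data counts n(q) collected at a position q over all these subtrees are additive
  along edges: a(p) is the sum of the a(p k) over the children p k of p, and likewise for n.
  Writing G(q) = Gamma(a(q) + n(q)) / Gamma(a(q)), the BDepu factor of the stage at p is
  therefore the product of the G(p k) divided by G(p).  The product of these factors over all
  non-subleaf positions telescopes to the product of G over the subleaf positions divided by
  G([]), which is exactly the factor of the merged stage u of the resized tree.  Every other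
  stage keeps its situations, their children and the leaves below them.\<close>

section \<open>Positions as label sequences\<close>

lemma nodeAt_snoc: "nodeAt ch s (p @ [k]) = ch (nodeAt ch s p) ! k"
  by (induction p arbitrary: s) auto

definition children_pos :: "nat list set \<Rightarrow> (nat list \<Rightarrow> nat) \<Rightarrow> nat list set" where
  "children_pos P d = {p @ [k] | p k. p \<in> P \<and> k < d p}"

lemma children_pos_image: "children_pos P d = (\<lambda>(p, k). p @ [k]) ` (SIGMA p:P. {..<d p})"
  unfolding children_pos_def by auto

lemma inj_on_snoc_Sigma: "inj_on (\<lambda>(p, k). p @ [k]) (SIGMA p:P. {..<d p})"
  by (auto simp: inj_on_def)

lemma finite_children_pos: "finite P \<Longrightarrow> finite (children_pos P d)"
  by (simp add: children_pos_image)

lemma children_pos_cong: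
  "(\<And>p. p \<in> P \<Longrightarrow> d p = d' p) \<Longrightarrow> children_pos P d = children_pos P d'"
  unfolding children_pos_def by metis

lemma subleaf_pos_eq_children_pos:
  "subleaf_pos ch s P = children_pos P (\<lambda>p. length (ch (nodeAt ch s p))) - P"
  unfolding subleaf_pos_def children_pos_def by blast

lemma sum_children_pos:
  fixes f :: "nat list \<Rightarrow> 'a::comm_monoid_add"
  assumes "finite P"
  shows "(\<Sum>p\<in>P. \<Sum>k<d p. f (p @ [k])) = (\<Sum>q\<in>children_pos P d. f q)"
  unfolding children_pos_image sum.reindex[OF inj_on_snoc_Sigma]
  using assms by (simp add: sum.Sigma comp_def split_def)

lemma prod_children_pos:
  fixes f :: "nat list \<Rightarrow> 'a::comm_monoid_mult"
  assumes "finite P"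
  shows "(\<Prod>p\<in>P. \<Prod>k<d p. f (p @ [k])) = (\<Prod>q\<in>children_pos P d. f q)"
  unfolding children_pos_image prod.reindex[OF inj_on_snoc_Sigma]
  using assms by (simp add: prod.Sigma comp_def split_def)

lemma children_pos_diff_nonempty:
  assumes "finite P" "[] \<in> P" "\<And>p. p \<in> P \<Longrightarrow> d p > 0"
  shows "children_pos P d - P \<noteq> {}"
proof -
  have "Max (length ` P) \<in> length ` P"
    using assms(1,2) by (intro Max_in) auto
  then obtain p where p: "p \<in> P" "length p = Max (length ` P)"
    by auto
  have "p @ [0] \<notin> P"
  proof
    assume "p @ [0] \<in> P"
    then have "length (p @ [0]) \<le> Max (length ` P)"
      using assms(1) by (intro Max_ge finite_imageI imageI)
    with p show False
      by simp
  qed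
  then have "p @ [0] \<in> children_pos P d - P"
    using p assms(3) by (auto simp: children_pos_def)
  then show ?thesis
    by blast
qed

context
  fixes P :: "nat list set" and d :: "nat list \<Rightarrow> nat"
  assumes finite_P: "finite P" and Nil_in_P: "[] \<in> P"
    and prefix_closed: "\<And>p k. p @ [k] \<in> P \<Longrightarrow> p \<in> P \<and> k < d p"
begin

lemma children_pos_split:
  "children_pos P d = (P - {[]}) \<union> (children_pos P d - P)"
  using prefix_closed by (auto simp: children_pos_def) (metis rev_exhaust)

lemma sum_telescope:
  fixes h :: "nat list \<Rightarrow> 'a::ab_group_add"
  assumes "\<And>p. p \<in> P \<Longrightarrow> h p = (\<Sum>k<d p. h (p @ [k]))"
  shows "h [] = (\<Sum>q\<in>children_pos P d - P. h q)"
proof -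
  have "h [] + (\<Sum>q\<in>P - {[]}. h q) = (\<Sum>p\<in>P. h p)"
    using finite_P Nil_in_P by (simp add: sum.remove)
  also have "\<dots> = (\<Sum>p\<in>P. \<Sum>k<d p. h (p @ [k]))"
    using assms by simp
  also have "\<dots> = (\<Sum>q\<in>(P - {[]}) \<union> (children_pos P d - P). h q)"
    using finite_P by (simp only: sum_children_pos flip: children_pos_split)
  also have "\<dots> = (\<Sum>q\<in>P - {[]}. h q) + (\<Sum>q\<in>children_pos P d - P. h q)"
    using finite_P finite_children_pos by (intro sum.union_disjoint) auto
  finally show ?thesis
    by (simp add: add.commute)
qed

lemma prod_telescope:
  fixes g :: "nat list \<Rightarrow> 'a::field"
  assumes "\<And>p. p \<in> P \<Longrightarrow> g p \<noteq> 0"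
  shows "(\<Prod>p\<in>P. (\<Prod>k<d p. g (p @ [k])) / g p) = (\<Prod>q\<in>children_pos P d - P. g q) / g []"
proof -
  let ?I = "\<Prod>q\<in>P - {[]}. g q"
  have "?I \<noteq> 0"
    using assms finite_P by simp
  have "(\<Prod>p\<in>P. (\<Prod>k<d p. g (p @ [k])) / g p) = (\<Prod>p\<in>P. \<Prod>k<d p. g (p @ [k])) / (\<Prod>p\<in>P. g p)"
    by (rule prod_dividef)
  also have "\<dots> = (\<Prod>q\<in>(P - {[]}) \<union> (children_pos P d - P). g q) / (g [] * ?I)"
    using finite_P Nil_in_P by (simp only: prod_children_pos prod.remove flip: children_pos_split)
  also have "\<dots> = (?I * (\<Prod>q\<in>children_pos P d - P. g q)) / (?I * g [])"
    using finite_P finite_children_pos by (subst prod.union_disjoint) auto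
  also have "\<dots> = (\<Prod>q\<in>children_pos P d - P. g q) / g []"
    using \<open>?I \<noteq> 0\<close> by simp
  finally show ?thesis .
qed

end

section \<open>Stage factors of the BDepu score\<close>

definition stage_factor ::
  "'v set \<Rightarrow> ('v \<Rightarrow> 'v list) \<Rightarrow> ('v \<Rightarrow> 's) \<Rightarrow> ('v \<Rightarrow> nat) \<Rightarrow> real \<Rightarrow> 's \<Rightarrow> real" where
  "stage_factor V ch st N \<alpha> j =
     (let rj = stage_arity V ch st j;
          a = alpha_jk V ch st \<alpha> j;
          n = (\<lambda>k. real (n_count V ch st N j k));
          abar = (\<Sum>k<rj. a k);
          nbar = (\<Sum>k<rj. n k)
      in Gamma abar / Gamma (abar + nbar) * (\<Prod>k<rj. Gamma (a k + n k) / Gamma (a k)))"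

lemma BDepu_eq_prod_stage_factor:
  "BDepu V r ch st N \<alpha> = (\<Prod>j\<in>stage_labels V ch st. stage_factor V ch st N \<alpha> j)"
  unfolding BDepu_def stage_factor_def ..

lemma stage_factor_eq:
  assumes "stage_arity V ch st j = m"
    and "\<And>k. k < m \<Longrightarrow> alpha_jk V ch st \<alpha> j k = a k"
    and "\<And>k. k < m \<Longrightarrow> n_count V ch st N j k = n k"
  shows "stage_factor V ch st N \<alpha> j =
           Gamma (\<Sum>k<m. a k) / Gamma ((\<Sum>k<m. a k) + (\<Sum>k<m. real (n k))) *
           (\<Prod>k<m. Gamma (a k + real (n k)) / Gamma (a k))"
  unfolding stage_factor_def Let_def assms(1) using assms(2,3) by simp

lemma stage_factor_cong:
  assumes stage: "stage V2 ch2 st j = stage V1 ch1 st j"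
    and leaves: "leaves V2 ch2 = leaves V1 ch1"
    and arity: "stage_arity V2 ch2 st j = stage_arity V1 ch1 st j"
    and below: "\<And>v k. v \<in> stage V1 ch1 st j \<Longrightarrow> k < stage_arity V1 ch1 st j \<Longrightarrow>
                  leaves_below V2 ch2 (ch2 v ! k) = leaves_below V1 ch1 (ch1 v ! k)"
  shows "stage_factor V2 ch2 st N \<alpha> j = stage_factor V1 ch1 st N \<alpha> j"
proof -
  let ?m = "stage_arity V1 ch1 st j"
  have "alpha_jk V2 ch2 st \<alpha> j k = alpha_jk V1 ch1 st \<alpha> j k" if "k < ?m" for k
    unfolding alpha_jk_def stage leaves using below that by simp
  moreover have "n_count V2 ch2 st N j k = n_count V1 ch1 st N j k" if "k < ?m" for k
    unfolding n_count_def stage leaves using below that by simp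
  ultimately show ?thesis
    by (subst stage_factor_eq[OF arity]) (simp_all add: stage_factor_def Let_def)
qed

section \<open>Event trees\<close>

locale rooted_tree =
  fixes V :: "'v set" and r :: 'v and ch :: "'v \<Rightarrow> 'v list"
  assumes event_tree: "event_tree V r ch"
begin

abbreviation "E \<equiv> tree_edges V ch"
abbreviation "LB \<equiv> leaves_below V ch"

lemma finite_V: "finite V"
  and root_in_V: "r \<in> V"
  and children_in_V: "v \<in> V \<Longrightarrow> set (ch v) \<subseteq> V"
  and distinct_children: "v \<in> V \<Longrightarrow> distinct (ch v)"
  and root_not_child: "v \<in> V \<Longrightarrow> r \<notin> set (ch v)"
  and unique_parent: "w \<in> V \<Longrightarrow> w \<noteq> r \<Longrightarrow> \<exists>!v. v \<in> V \<and> w \<in> set (ch v)"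
  and no_cycle_in_V: "v \<in> V \<Longrightarrow> (v, v) \<notin> E\<^sup>+"
  using event_tree unfolding event_tree_def by auto

lemma edge_iff: "(a, b) \<in> E \<longleftrightarrow> a \<in> V \<and> b \<in> set (ch a)"
  by (simp add: tree_edges_def)

lemma parent_eq:
  "a \<in> V \<Longrightarrow> b \<in> V \<Longrightarrow> x \<in> set (ch a) \<Longrightarrow> x \<in> set (ch b) \<Longrightarrow> a = b"
  using unique_parent[of x] children_in_V root_not_child by blast

lemma reach_in_V: "(a, b) \<in> E\<^sup>* \<Longrightarrow> a \<in> V \<Longrightarrow> b \<in> V"
  by (induction rule: rtrancl_induct) (use children_in_V edge_iff in auto)

lemma no_cycle: "(v, v) \<notin> E\<^sup>+"
  using no_cycle_in_V by (metis edge_iff tranclD)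

lemma ancestors_comparable:
  assumes "(a, x) \<in> E\<^sup>*" "(b, x) \<in> E\<^sup>*"
  shows "(a, b) \<in> E\<^sup>* \<or> (b, a) \<in> E\<^sup>*"
  using assms
proof (induction rule: rtrancl_induct)
  case base
  then show ?case by simp
next
  case (step y z)
  from step.prems show ?case
  proof (cases rule: rtranclE)
    case base
    then show ?thesis using step by auto
  next
    case (step w)
    then have "w = y"
      using parent_eq \<open>(y, z) \<in> E\<close> by (auto simp: edge_iff)
    then show ?thesis
      using \<open>(b, w) \<in> E\<^sup>*\<close> \<open>(b, y) \<in> E\<^sup>* \<Longrightarrow> _\<close> by blast
  qed
qed

lemma leaves_below_subset: "LB w \<subseteq> leaves V ch"
  by (auto simp: leaves_below_def)

lemma finite_leaves: "finite (leaves V ch)"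
  using finite_V by (auto simp: leaves_def)

lemma finite_leaves_below: "finite (LB w)"
  using leaves_below_subset finite_leaves by (rule finite_subset)

lemma leaves_below_situation:
  assumes "v \<in> V" "ch v \<noteq> []"
  shows "LB v = (\<Union>k<length (ch v). LB (ch v ! k))"
proof
  show "LB v \<subseteq> (\<Union>k<length (ch v). LB (ch v ! k))"
  proof
    fix l assume "l \<in> LB v"
    then have "(v, l) \<in> E\<^sup>*" "l \<in> leaves V ch"
      by (auto simp: leaves_below_def)
    moreover have "l \<noteq> v"
      using assms \<open>l \<in> leaves V ch\<close> by (auto simp: leaves_def)
    ultimately obtain y where "(v, y) \<in> E" "(y, l) \<in> E\<^sup>*"
      by (metis converse_rtranclE)
    then obtain k where "k < length (ch v)" "y = ch v ! k"
      by (auto simp: edge_iff in_set_conv_nth)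
    then show "l \<in> (\<Union>k<length (ch v). LB (ch v ! k))"
      using \<open>(y, l) \<in> E\<^sup>*\<close> \<open>l \<in> leaves V ch\<close> by (auto simp: leaves_below_def)
  qed
  show "(\<Union>k<length (ch v). LB (ch v ! k)) \<subseteq> LB v"
  proof
    fix l assume "l \<in> (\<Union>k<length (ch v). LB (ch v ! k))"
    then obtain k where k: "k < length (ch v)" "l \<in> LB (ch v ! k)"
      by blast
    then have "(v, ch v ! k) \<in> E"
      using assms(1) by (simp add: edge_iff)
    with k show "l \<in> LB v"
      by (auto simp: leaves_below_def)
  qed
qed

lemma leaves_below_children_disjoint:
  assumes "v \<in> V" "k < length (ch v)" "k' < length (ch v)" "k \<noteq> k'"
  shows "LB (ch v ! k) \<inter> LB (ch v ! k') = {}"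
proof -
  have no_reach: "(c, c') \<notin> E\<^sup>*" if "c \<in> set (ch v)" "c' \<in> set (ch v)" "c \<noteq> c'" for c c'
  proof
    assume "(c, c') \<in> E\<^sup>*"
    with \<open>c \<noteq> c'\<close> obtain y where "(c, y) \<in> E\<^sup>*" "(y, c') \<in> E"
      by (metis rtranclE)
    then have "y = v"
      using parent_eq[of y v c'] assms(1) that(2) by (auto simp: edge_iff)
    moreover have "(v, c) \<in> E"
      using assms(1) that(1) by (simp add: edge_iff)
    ultimately have "(v, v) \<in> E\<^sup>+"
      using \<open>(c, y) \<in> E\<^sup>*\<close> by (simp add: rtrancl_into_trancl2)
    then show False
      using no_cycle by blast
  qed
  have "ch v ! k \<noteq> ch v ! k'"
    using distinct_children[OF assms(1)] assms(2-4) by (simp add: nth_eq_iff_index_eq)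
  then show ?thesis
    using ancestors_comparable no_reach assms(2,3) by (fastforce simp: leaves_below_def)
qed

lemma card_leaves_below_situation:
  assumes "v \<in> V" "ch v \<noteq> []"
  shows "card (LB v) = (\<Sum>k<length (ch v). card (LB (ch v ! k)))"
  unfolding leaves_below_situation[OF assms]
  using leaves_below_children_disjoint[OF assms(1)]
  by (intro card_UN_disjoint) (auto simp: finite_leaves_below)

lemma leaves_below_nonempty:
  assumes "w \<in> V"
  shows "LB w \<noteq> {}"
proof -
  have "E \<subseteq> V \<times> V"
    unfolding tree_edges_def using children_in_V by blast
  then have "wf (E\<inverse>)"
    using finite_V no_cycle
    by (intro finite_acyclic_wf_converse) (auto intro: finite_subset simp: acyclic_def)
  then obtain x where x: "(w, x) \<in> E\<^sup>*" "\<And>y. (x, y) \<in> E \<Longrightarrow> (w, y) \<notin> E\<^sup>*"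
    using wfE_min[of "E\<inverse>" w "{x. (w, x) \<in> E\<^sup>*}"] by auto
  have "x \<in> V"
    using reach_in_V x(1) assms by blast
  moreover have "ch x = []"
    using x \<open>x \<in> V\<close> by (metis edge_iff list.set_sel(1) rtrancl.rtrancl_into_rtrancl)
  ultimately have "x \<in> LB w"
    using x(1) by (auto simp: leaves_below_def leaves_def)
  then show ?thesis
    by blast
qed

lemma card_leaves_pos: "card (leaves V ch) > 0"
  using leaves_below_nonempty[OF root_in_V] leaves_below_subset finite_leaves
  by (metis card_gt_0_iff subset_empty)

definition subtree_node_pos :: "'v \<Rightarrow> nat list set \<Rightarrow> nat list set" where
  "subtree_node_pos s P = P \<union> children_pos P (\<lambda>p. length (ch (nodeAt ch s p)))"

context
  fixes s P
  assumes subtree: "valid_subtree V ch s P"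
begin

lemma subtree_Nil: "[] \<in> P"
  using subtree by (simp add: valid_subtree_def)

lemma subtree_situation: "p \<in> P \<Longrightarrow> nodeAt ch s p \<in> V \<and> ch (nodeAt ch s p) \<noteq> []"
  using subtree by (simp add: valid_subtree_def is_situation_def)

lemma subtree_prefix_closed: "p @ [k] \<in> P \<Longrightarrow> p \<in> P \<and> k < length (ch (nodeAt ch s p))"
  using subtree by (simp add: valid_subtree_def)

lemma subtree_node_pos_snoc:
  "q @ [k] \<in> subtree_node_pos s P \<Longrightarrow> q \<in> P \<and> k < length (ch (nodeAt ch s q))"
  using subtree_prefix_closed by (auto simp: subtree_node_pos_def children_pos_def)

lemma subset_subtree_node_pos: "P \<subseteq> subtree_node_pos s P"
  by (simp add: subtree_node_pos_def)

lemma edge_subtree_node_pos: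
  assumes "q @ [k] \<in> subtree_node_pos s P"
  shows "(nodeAt ch s q, nodeAt ch s (q @ [k])) \<in> E"
  using subtree_node_pos_snoc[OF assms] subtree_situation by (simp add: nodeAt_snoc edge_iff)

lemma reach_subtree_node_pos: "q \<in> subtree_node_pos s P \<Longrightarrow> (s, nodeAt ch s q) \<in> E\<^sup>*"
proof (induction q rule: rev_induct)
  case Nil
  then show ?case by simp
next
  case (snoc k q)
  then have "(s, nodeAt ch s q) \<in> E\<^sup>*"
    using subtree_node_pos_snoc subset_subtree_node_pos by blast
  then show ?case
    using edge_subtree_node_pos[OF snoc.prems] by simp
qed

lemma trancl_subtree_node_pos:
  assumes "q \<in> subtree_node_pos s P" "q \<noteq> []"
  shows "(s, nodeAt ch s q) \<in> E\<^sup>+"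
proof -
  obtain q' k where q: "q = q' @ [k]"
    using assms(2) rev_exhaust by blast
  then have "(s, nodeAt ch s q') \<in> E\<^sup>*"
    using assms(1) subtree_node_pos_snoc subset_subtree_node_pos reach_subtree_node_pos by blast
  then show ?thesis
    using edge_subtree_node_pos assms(1) q by (simp add: rtrancl_into_trancl1)
qed

lemma subtree_node_pos_in_V: "q \<in> subtree_node_pos s P \<Longrightarrow> nodeAt ch s q \<in> V"
  using reach_in_V reach_subtree_node_pos subtree_situation[OF subtree_Nil] by fastforce

lemma nodeAt_ne_root: "q \<in> subtree_node_pos s P \<Longrightarrow> q \<noteq> [] \<Longrightarrow> nodeAt ch s q \<noteq> s"
  using trancl_subtree_node_pos no_cycle by fastforce

lemma inj_on_subtree_node_pos: "inj_on (nodeAt ch s) (subtree_node_pos s P)"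
proof -
  have "p = q"
    if "p \<in> subtree_node_pos s P" "q \<in> subtree_node_pos s P" "nodeAt ch s p = nodeAt ch s q"
    for p q
    using that
  proof (induction p arbitrary: q rule: rev_induct)
    case Nil
    then show ?case
      using nodeAt_ne_root by force
  next
    case (snoc k p)
    note prems = snoc.prems and IH = snoc.IH
    show ?case
    proof (cases q rule: rev_exhaust)
      case Nil
      then show ?thesis
        using prems nodeAt_ne_root by force
    next
      case (snoc q' k')
      have p: "p \<in> P" "k < length (ch (nodeAt ch s p))"
        using subtree_node_pos_snoc prems(1) by blast+
      have q': "q' \<in> P" "k' < length (ch (nodeAt ch s q'))"
        using subtree_node_pos_snoc prems(2) snoc by blast+
      have child: "ch (nodeAt ch s p) ! k = ch (nodeAt ch s q') ! k'"
        using prems(3) snoc by (simp add: nodeAt_snoc)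
      then have same_parent: "nodeAt ch s p = nodeAt ch s q'"
        using parent_eq subtree_situation p q' by (metis nth_mem)
      then have "p = q'"
        using IH p(1) q'(1) subset_subtree_node_pos by blast
      moreover have "k = k'"
        using child same_parent distinct_children subtree_situation p q'
        by (simp add: nth_eq_iff_index_eq)
      ultimately show ?thesis
        using snoc by simp
    qed
  qed
  then show ?thesis
    by (rule inj_onI)
qed

lemma finite_subtree: "finite P"
proof (rule finite_imageD)
  show "finite (nodeAt ch s ` P)"
    using subtree_situation finite_V by (auto intro: finite_subset)
  show "inj_on (nodeAt ch s) P"
    using inj_on_subtree_node_pos subset_subtree_node_pos by (rule inj_on_subset)
qed

end

end

section \<open>Conditionally saturated subtrees and the resized tree\<close>

locale resize_setting = rooted_tree V r ch for V :: "'v set" and r and ch +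
  fixes st :: "'v \<Rightarrow> 's" and u :: 's and T :: "'v \<Rightarrow> nat list set"
  assumes staged: "staged_tree V r ch st"
    and square_free_st: "square_free V ch st"
    and u_stage_label: "u \<in> stage_labels V ch st"
    and saturated: "cond_saturated V ch st u T"
begin

abbreviation "U \<equiv> stage V ch st u"

lemma in_U_iff: "s \<in> U \<longleftrightarrow> s \<in> V \<and> ch s \<noteq> [] \<and> st s = u"
  by (simp add: stage_def is_situation_def)

lemma U_nonempty: "U \<noteq> {}"
  using u_stage_label by (auto simp: stage_labels_def stage_def)

lemma finite_U: "finite U"
  using finite_V by (rule finite_subset[rotated]) (auto simp: in_U_iff)

definition s0 :: 'v where "s0 = (SOME s. s \<in> U)"

lemma s0_in_U: "s0 \<in> U"
  using U_nonempty by (simp add: s0_def some_in_eq)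

definition Pos :: "nat list set" where "Pos = T s0"

definition branching :: "nat list \<Rightarrow> nat" where
  "branching p = length (ch (nodeAt ch s0 p))"

definition stage_lbl :: "nat list \<Rightarrow> 's" where
  "stage_lbl p = st (nodeAt ch s0 p)"

lemma saturated_valid: "s \<in> U \<Longrightarrow> valid_subtree V ch s (T s)"
  using saturated unfolding cond_saturated_def by (elim conjE) (erule bspec)

lemma saturated_same_T: "s \<in> U \<Longrightarrow> s' \<in> U \<Longrightarrow> T s = T s'"
  using saturated unfolding cond_saturated_def by (elim conjE) meson

lemma saturated_same_stage:
  "s \<in> U \<Longrightarrow> s' \<in> U \<Longrightarrow> p \<in> T s \<Longrightarrow> st (nodeAt ch s p) = st (nodeAt ch s' p)"
  using saturated unfolding cond_saturated_def by (elim conjE) meson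

lemma saturated_no_repeat:
  "s \<in> U \<Longrightarrow> p \<in> T s \<Longrightarrow> p' \<in> T s \<Longrightarrow> st (nodeAt ch s p) = st (nodeAt ch s p') \<Longrightarrow> p = p'"
  using saturated unfolding cond_saturated_def by (elim conjE) meson

lemma saturated_closed:
  "s \<in> U \<Longrightarrow> p \<in> T s \<Longrightarrow> p \<noteq> [] \<Longrightarrow> is_situation V ch w \<Longrightarrow> st w = st (nodeAt ch s p)
    \<Longrightarrow> \<exists>s'\<in>U. \<exists>p'\<in>T s'. w = nodeAt ch s' p'"
  using saturated unfolding cond_saturated_def by (elim conjE) meson

lemma T_eq_Pos: "s \<in> U \<Longrightarrow> T s = Pos"
  using saturated_same_T s0_in_U unfolding Pos_def by blast

lemma valid_subtree_Pos: "s \<in> U \<Longrightarrow> valid_subtree V ch s Pos"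
  using saturated_valid T_eq_Pos by metis

lemmas Pos_situation = subtree_situation[OF valid_subtree_Pos]
  and reach_Pos = reach_subtree_node_pos[OF valid_subtree_Pos]
  and Pos_in_V = subtree_node_pos_in_V[OF valid_subtree_Pos]

lemma st_nodeAt_Pos: "s \<in> U \<Longrightarrow> p \<in> Pos \<Longrightarrow> st (nodeAt ch s p) = stage_lbl p"
  using saturated_same_stage[of s s0 p] s0_in_U T_eq_Pos by (simp add: stage_lbl_def)

lemma same_stage_length:
  "is_situation V ch v \<Longrightarrow> is_situation V ch w \<Longrightarrow> st v = st w \<Longrightarrow> length (ch v) = length (ch w)"
  using staged unfolding staged_tree_def by blast

lemma stage_arity_eq_length:
  assumes "v \<in> stage V ch st j"
  shows "stage_arity V ch st j = length (ch v)"
proof -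
  have "(SOME w. w \<in> stage V ch st j) \<in> stage V ch st j"
    using assms by (rule someI)
  then have "is_situation V ch (SOME w. w \<in> stage V ch st j)" "st (SOME w. w \<in> stage V ch st j) = j"
    by (simp_all add: stage_def)
  moreover have "is_situation V ch v" "st v = j"
    using assms by (simp_all add: stage_def)
  ultimately show ?thesis
    unfolding stage_arity_def by (metis same_stage_length)
qed

lemma length_nodeAt_Pos:
  assumes "s \<in> U" "p \<in> Pos"
  shows "length (ch (nodeAt ch s p)) = branching p"
proof -
  have "is_situation V ch (nodeAt ch s p)" "is_situation V ch (nodeAt ch s0 p)"
    using Pos_situation assms s0_in_U by (simp_all add: is_situation_def)
  then show ?thesis
    using same_stage_length st_nodeAt_Pos[OF assms] st_nodeAt_Pos[OF s0_in_U assms(2)]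
    unfolding branching_def by metis
qed

lemma inj_on_stage_lbl: "inj_on stage_lbl Pos"
  unfolding inj_on_def stage_lbl_def Pos_def using saturated_no_repeat[OF s0_in_U] by blast

lemma stage_lbl_Nil: "stage_lbl [] = u"
  using s0_in_U by (simp add: stage_lbl_def in_U_iff)

lemma finite_Pos: "finite Pos"
  using finite_subtree[OF valid_subtree_Pos[OF s0_in_U]] .

lemma Nil_in_Pos: "[] \<in> Pos"
  using subtree_Nil[OF valid_subtree_Pos[OF s0_in_U]] .

lemma Pos_prefix_closed: "p @ [k] \<in> Pos \<Longrightarrow> p \<in> Pos \<and> k < branching p"
  using subtree_prefix_closed[OF valid_subtree_Pos[OF s0_in_U]] by (simp add: branching_def)

lemma branching_pos: "p \<in> Pos \<Longrightarrow> branching p > 0"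
  using Pos_situation[OF s0_in_U] by (simp add: branching_def)

lemma U_eq_if_reach:
  assumes "s \<in> U" "s' \<in> U" "(s, s') \<in> E\<^sup>*"
  shows "s = s'"
proof (rule ccontr)
  assume "s \<noteq> s'"
  with assms(3) have "(s, s') \<in> E\<^sup>+"
    by (simp add: rtrancl_eq_or_trancl)
  moreover have "is_situation V ch s" "is_situation V ch s'" "st s = st s'"
    using assms(1,2) by (simp_all add: stage_def)
  ultimately show False
    using square_free_st unfolding square_free_def by blast
qed

lemma U_eq_if_common_descendant:
  assumes "s \<in> U" "s' \<in> U" "(s, x) \<in> E\<^sup>*" "(s', x) \<in> E\<^sup>*"
  shows "s = s'"
  using ancestors_comparable[OF assms(3,4)] U_eq_if_reach[OF assms(1,2)]
    U_eq_if_reach[OF assms(2,1)]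
  by auto

lemma situation_at_stage_lbl:
  assumes "is_situation V ch w" "p \<in> Pos" "p \<noteq> []" "st w = stage_lbl p"
  shows "\<exists>s\<in>U. w = nodeAt ch s p"
proof -
  obtain s p' where s: "s \<in> U" "p' \<in> Pos" "w = nodeAt ch s p'"
    using saturated_closed[OF s0_in_U, of p w] assms T_eq_Pos by (auto simp: stage_lbl_def Pos_def)
  then have "p' = p"
    using st_nodeAt_Pos inj_on_stage_lbl assms(2,4) by (metis inj_onD)
  with s show ?thesis
    by blast
qed

lemma stage_of_stage_lbl: "p \<in> Pos \<Longrightarrow> stage V ch st (stage_lbl p) = (\<lambda>s. nodeAt ch s p) ` U"
proof (cases "p = []")
  case True
  then show ?thesis by (simp add: stage_lbl_Nil)
next
  case False
  assume p: "p \<in> Pos"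
  show ?thesis
  proof
    show "stage V ch st (stage_lbl p) \<subseteq> (\<lambda>s. nodeAt ch s p) ` U"
      using situation_at_stage_lbl[OF _ p False] by (auto simp: stage_def)
    show "(\<lambda>s. nodeAt ch s p) ` U \<subseteq> stage V ch st (stage_lbl p)"
      using Pos_situation st_nodeAt_Pos p by (auto simp: stage_def is_situation_def)
  qed
qed

definition node_pos :: "nat list set" where
  "node_pos = Pos \<union> children_pos Pos branching"

lemma children_pos_U:
  "s \<in> U \<Longrightarrow> children_pos Pos (\<lambda>p. length (ch (nodeAt ch s p))) = children_pos Pos branching"
  by (intro children_pos_cong length_nodeAt_Pos)

lemma subtree_node_pos_eq_node_pos: "s \<in> U \<Longrightarrow> subtree_node_pos s Pos = node_pos"
  by (simp add: subtree_node_pos_def node_pos_def children_pos_U)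

lemma Pos_subset_node_pos: "Pos \<subseteq> node_pos"
  by (simp add: node_pos_def)

lemma reach_node_pos: "s \<in> U \<Longrightarrow> q \<in> node_pos \<Longrightarrow> (s, nodeAt ch s q) \<in> E\<^sup>*"
  using reach_Pos subtree_node_pos_eq_node_pos by blast

lemma node_pos_in_V: "s \<in> U \<Longrightarrow> q \<in> node_pos \<Longrightarrow> nodeAt ch s q \<in> V"
  using Pos_in_V subtree_node_pos_eq_node_pos by blast

lemma inj_on_U_nodeAt: "q \<in> node_pos \<Longrightarrow> inj_on (\<lambda>s. nodeAt ch s q) U"
  using reach_node_pos U_eq_if_common_descendant by (intro inj_onI) metis

definition removed :: "'v set" where
  "removed = {nodeAt ch s p | s p. s \<in> U \<and> p \<in> Pos \<and> p \<noteq> []}"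

definition subleaves :: "nat list set" where
  "subleaves = children_pos Pos branching - Pos"

lemma subleaves_subset_node_pos: "subleaves \<subseteq> node_pos"
  by (auto simp: subleaves_def node_pos_def)

lemma finite_subleaves: "finite subleaves"
  using finite_Pos finite_children_pos by (simp add: subleaves_def)

lemma subleaves_nonempty: "subleaves \<noteq> {}"
  unfolding subleaves_def using finite_Pos Nil_in_Pos branching_pos
  by (rule children_pos_diff_nonempty)

lemma subleaf_pos_eq_subleaves: "s \<in> U \<Longrightarrow> subleaf_pos ch s (T s) = subleaves"
  by (simp add: T_eq_Pos subleaf_pos_eq_children_pos children_pos_U subleaves_def)

lemma removed_situation: "x \<in> removed \<Longrightarrow> x \<in> V \<and> ch x \<noteq> [] \<and> st x \<in> stage_lbl ` Pos"
  using Pos_situation st_nodeAt_Pos by (auto simp: removed_def)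

lemma nodeAt_not_removed:
  assumes "s \<in> U" "q \<in> node_pos" "q \<notin> Pos \<or> q = []"
  shows "nodeAt ch s q \<notin> removed"
proof
  assume "nodeAt ch s q \<in> removed"
  then obtain s' p where p: "s' \<in> U" "p \<in> Pos" "p \<noteq> []" "nodeAt ch s q = nodeAt ch s' p"
    unfolding removed_def by blast
  then have "s' = s"
    using U_eq_if_common_descendant reach_node_pos Pos_subset_node_pos assms(1,2) by (metis subsetD)
  then have "q = p"
    using inj_on_subtree_node_pos[OF valid_subtree_Pos[OF assms(1)]] subtree_node_pos_eq_node_pos
      assms(1,2) p Pos_subset_node_pos
    by (auto dest: inj_onD)
  then show False
    using assms(3) p(2,3) by blast
qed

lemma U_not_removed: "s \<in> U \<Longrightarrow> s \<notin> removed"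
  using nodeAt_not_removed[of s "[]"] Nil_in_Pos Pos_subset_node_pos by auto

lemma child_not_removed:
  assumes "v \<in> V" "v \<notin> U" "v \<notin> removed" "c \<in> set (ch v)"
  shows "c \<notin> removed"
proof
  assume "c \<in> removed"
  then obtain s q where q: "s \<in> U" "q \<in> Pos" "q \<noteq> []" "c = nodeAt ch s q"
    unfolding removed_def by blast
  then obtain p k where p: "s \<in> U" "p @ [k] \<in> Pos" "c = nodeAt ch s (p @ [k])"
    by (metis rev_exhaust)
  then have "p \<in> Pos" "c \<in> set (ch (nodeAt ch s p))"
    using Pos_prefix_closed length_nodeAt_Pos by (auto simp: nodeAt_snoc)
  then have "v = nodeAt ch s p"
    using parent_eq assms(1,4) Pos_situation p(1) by blast
  then have "v \<in> U \<or> v \<in> removed"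
    using p(1) \<open>p \<in> Pos\<close> unfolding removed_def by (cases "p = []") auto
  with assms(2,3) show False
    by blast
qed

definition subleaf_list :: "nat list list" where
  "subleaf_list = sorted_list_of_set subleaves"

definition V' :: "'v set" where "V' = V - removed"

definition ch' :: "'v \<Rightarrow> 'v list" where
  "ch' v = (if v \<in> U then map (nodeAt ch v) subleaf_list else ch v)"

abbreviation "E' \<equiv> tree_edges V' ch'"
abbreviation "LB' \<equiv> leaves_below V' ch'"

lemma resize_V_eq: "resize_V V ch st u T = V'"
proof -
  have "{nodeAt ch s p | s p. s \<in> U \<and> p \<in> T s \<and> p \<noteq> []} = removed"
    unfolding removed_def using T_eq_Pos by blast
  then show ?thesis
    by (simp add: resize_V_def V'_def)
qed

lemma resize_ch_eq: "resize_ch V ch st u T = ch'"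
  by (auto simp: resize_ch_def ch'_def subleaf_list_def subleaf_pos_eq_subleaves)

lemma distinct_subleaf_list: "distinct subleaf_list"
  and set_subleaf_list: "set subleaf_list = subleaves"
  using finite_subleaves by (simp_all add: subleaf_list_def)

lemma ch'_U_nonempty: "v \<in> U \<Longrightarrow> ch' v \<noteq> []"
  using set_subleaf_list subleaves_nonempty by (auto simp: ch'_def)

lemma leaves_resize: "leaves V' ch' = leaves V ch"
proof
  show "leaves V' ch' \<subseteq> leaves V ch"
    using ch'_U_nonempty by (auto simp: leaves_def V'_def ch'_def split: if_splits)
  show "leaves V ch \<subseteq> leaves V' ch'"
    using removed_situation by (auto simp: leaves_def V'_def ch'_def in_U_iff)
qed

lemma situation_resize_iff: "is_situation V' ch' v \<longleftrightarrow> is_situation V ch v \<and> v \<notin> removed"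
  using ch'_U_nonempty in_U_iff by (auto simp: is_situation_def V'_def ch'_def)

lemma subleaf_in_V': "s \<in> U \<Longrightarrow> q \<in> subleaves \<Longrightarrow> nodeAt ch s q \<in> V'"
  using nodeAt_not_removed node_pos_in_V subleaves_subset_node_pos
  by (auto simp: V'_def subleaves_def)

lemma reach_of_edge_resize: "(a, b) \<in> E' \<Longrightarrow> (a, b) \<in> E\<^sup>*"
  using reach_node_pos subleaves_subset_node_pos set_subleaf_list
  by (auto simp: tree_edges_def ch'_def V'_def split: if_splits)

lemma reach_of_reach_resize: "(a, b) \<in> E'\<^sup>* \<Longrightarrow> (a, b) \<in> E\<^sup>*"
  by (induction rule: rtrancl_induct) (auto dest: reach_of_edge_resize)

lemma edge_resize_U: "s \<in> U \<Longrightarrow> q \<in> subleaves \<Longrightarrow> (s, nodeAt ch s q) \<in> E'"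
  using U_not_removed set_subleaf_list by (simp add: tree_edges_def ch'_def V'_def in_U_iff)

lemma edge_resize_other: "x \<in> V' \<Longrightarrow> x \<notin> U \<Longrightarrow> y \<in> set (ch x) \<Longrightarrow> (x, y) \<in> E'"
  by (simp add: tree_edges_def ch'_def)

lemma child_in_V': "x \<in> V' \<Longrightarrow> x \<notin> U \<Longrightarrow> y \<in> set (ch x) \<Longrightarrow> y \<in> V'"
  using child_not_removed children_in_V by (auto simp: V'_def)

text \<open>The second conjunct is the invariant for nodes inside a contracted subtree: the leaves
  below them are reached in the resized tree from the root of that subtree.\<close>
lemma reach_leaf_resize:
  assumes "(x, l) \<in> E\<^sup>*" "l \<in> leaves V ch"
  shows "(x \<in> V' \<longrightarrow> (x, l) \<in> E'\<^sup>*) \<and> (\<forall>s\<in>U. \<forall>p\<in>Pos. x = nodeAt ch s p \<longrightarrow> (s, l) \<in> E'\<^sup>*)"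
  using assms(1)
proof (induction rule: converse_rtrancl_induct)
  case base
  have "l \<noteq> nodeAt ch s p" if "s \<in> U" "p \<in> Pos" for s p
    using Pos_situation[OF that] assms(2) by (auto simp: leaves_def)
  then show ?case
    by blast
next
  case (step x y)
  then have IH_outer: "y \<in> V' \<Longrightarrow> (y, l) \<in> E'\<^sup>*"
    and IH_inner: "\<And>s p. s \<in> U \<Longrightarrow> p \<in> Pos \<Longrightarrow> y = nodeAt ch s p \<Longrightarrow> (s, l) \<in> E'\<^sup>*"
    by blast+
  have xy: "x \<in> V" "y \<in> set (ch x)"
    using step(1) by (simp_all add: edge_iff)
  have inner: "(s, l) \<in> E'\<^sup>*" if sp: "s \<in> U" "p \<in> Pos" "x = nodeAt ch s p" for s p
  proof -
    obtain k where k: "k < branching p" "y = nodeAt ch s (p @ [k])"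
      using xy(2) sp length_nodeAt_Pos[OF sp(1,2)] by (auto simp: nodeAt_snoc in_set_conv_nth)
    show ?thesis
    proof (cases "p @ [k] \<in> Pos")
      case True
      then show ?thesis
        using IH_inner sp(1) k(2) by blast
    next
      case False
      then have "p @ [k] \<in> subleaves"
        using sp(2) k(1) by (auto simp: subleaves_def children_pos_def)
      then have "y \<in> V'" "(s, y) \<in> E'"
        using subleaf_in_V' edge_resize_U sp(1) k(2) by simp_all
      then show ?thesis
        using IH_outer by (meson converse_rtrancl_into_rtrancl)
    qed
  qed
  have outer: "(x, l) \<in> E'\<^sup>*" if "x \<in> V'"
  proof (cases "x \<in> U")
    case True
    then show ?thesis
      using inner[of x "[]"] Nil_in_Pos by simp
  next
    case False
    then show ?thesis
      using edge_resize_other[OF that False xy(2)] child_in_V'[OF that False xy(2)] IH_outer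
      by (meson converse_rtrancl_into_rtrancl)
  qed
  show ?case
    using inner outer by blast
qed

lemma leaves_below_resize:
  assumes "w \<in> V'"
  shows "LB' w = LB w"
proof
  show "LB' w \<subseteq> LB w"
    using reach_of_reach_resize by (auto simp: leaves_below_def leaves_resize)
  show "LB w \<subseteq> LB' w"
    using reach_leaf_resize assms by (auto simp: leaves_below_def leaves_resize)
qed

section \<open>Additivity of the scores along the common subtree shape\<close>

definition alpha_at :: "real \<Rightarrow> nat list \<Rightarrow> real" where
  "alpha_at \<alpha> q = \<alpha> / real (card (leaves V ch)) * (\<Sum>s\<in>U. real (card (LB (nodeAt ch s q))))"

definition leaves_at :: "nat list \<Rightarrow> 'v set" where
  "leaves_at q = (\<Union>s\<in>U. LB (nodeAt ch s q))"

definition count_at :: "('v \<Rightarrow> nat) \<Rightarrow> nat list \<Rightarrow> nat" where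
  "count_at N q = (\<Sum>l\<in>leaves_at q. N l)"

definition gamma_ratio :: "real \<Rightarrow> ('v \<Rightarrow> nat) \<Rightarrow> nat list \<Rightarrow> real" where
  "gamma_ratio \<alpha> N q = Gamma (alpha_at \<alpha> q + real (count_at N q)) / Gamma (alpha_at \<alpha> q)"

lemma finite_leaves_at: "finite (leaves_at q)"
  unfolding leaves_at_def using finite_U finite_leaves_below by blast

lemma stage_arity_stage_lbl: "p \<in> Pos \<Longrightarrow> stage_arity V ch st (stage_lbl p) = branching p"
  using stage_arity_eq_length[of "nodeAt ch s0 p"] stage_of_stage_lbl s0_in_U
  by (simp add: branching_def)

lemma alpha_jk_stage_lbl:
  assumes "p \<in> Pos"
  shows "alpha_jk V ch st \<alpha> (stage_lbl p) k = alpha_at \<alpha> (p @ [k])"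
proof -
  have "inj_on (\<lambda>s. nodeAt ch s p) U"
    using inj_on_U_nodeAt Pos_subset_node_pos assms by blast
  then show ?thesis
    unfolding alpha_jk_def alpha_at_def stage_of_stage_lbl[OF assms]
    by (simp add: sum.reindex nodeAt_snoc)
qed

lemma n_count_stage_lbl: "p \<in> Pos \<Longrightarrow> n_count V ch st N (stage_lbl p) k = count_at N (p @ [k])"
proof -
  assume "p \<in> Pos"
  then have "{l \<in> leaves V ch. \<exists>v\<in>stage V ch st (stage_lbl p). l \<in> LB (ch v ! k)} =
      leaves_at (p @ [k])"
    using leaves_below_subset by (auto simp: stage_of_stage_lbl leaves_at_def nodeAt_snoc)
  then show ?thesis
    by (simp add: n_count_def count_at_def)
qed

lemma alpha_at_children: "p \<in> Pos \<Longrightarrow> (\<Sum>k<branching p. alpha_at \<alpha> (p @ [k])) = alpha_at \<alpha> p"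
proof -
  assume p: "p \<in> Pos"
  have per_root: "(\<Sum>k<branching p. real (card (LB (nodeAt ch s (p @ [k]))))) =
      real (card (LB (nodeAt ch s p)))" if "s \<in> U" for s
    using card_leaves_below_situation[of "nodeAt ch s p"] Pos_situation[OF that p]
      length_nodeAt_Pos[OF that p] by (simp add: nodeAt_snoc)
  have "(\<Sum>s\<in>U. \<Sum>k<branching p. real (card (LB (nodeAt ch s (p @ [k]))))) =
      (\<Sum>s\<in>U. real (card (LB (nodeAt ch s p))))"
    by (rule sum.cong[OF refl per_root])
  then have "(\<Sum>k<branching p. \<Sum>s\<in>U. real (card (LB (nodeAt ch s (p @ [k]))))) =
      (\<Sum>s\<in>U. real (card (LB (nodeAt ch s p))))"
    by (subst sum.swap)
  then show ?thesis
    unfolding alpha_at_def sum_distrib_left[symmetric] by simp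
qed

lemma leaves_at_children: "p \<in> Pos \<Longrightarrow> leaves_at p = (\<Union>k<branching p. leaves_at (p @ [k]))"
proof -
  assume p: "p \<in> Pos"
  have "LB (nodeAt ch s p) = (\<Union>k<branching p. LB (nodeAt ch s (p @ [k])))" if "s \<in> U" for s
    using leaves_below_situation[of "nodeAt ch s p"] Pos_situation[OF that p]
      length_nodeAt_Pos[OF that p] by (simp add: nodeAt_snoc)
  then show ?thesis
    unfolding leaves_at_def by blast
qed

lemma leaves_at_children_disjoint:
  assumes p: "p \<in> Pos" and k: "k < branching p" "k' < branching p" "k \<noteq> k'"
  shows "leaves_at (p @ [k]) \<inter> leaves_at (p @ [k']) = {}"
proof -
  have "LB (nodeAt ch s (p @ [k])) \<inter> LB (nodeAt ch s' (p @ [k'])) = {}" if "s \<in> U" "s' \<in> U" for s s'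
  proof (cases "s = s'")
    case True
    then show ?thesis
      using leaves_below_children_disjoint Pos_situation[OF that(1) p]
        length_nodeAt_Pos[OF that(1) p] k
      by (simp add: nodeAt_snoc)
  next
    case False
    have "p @ [k] \<in> node_pos" "p @ [k'] \<in> node_pos"
      using p k by (auto simp: node_pos_def children_pos_def)
    then have "(s, l) \<in> E\<^sup>*" "(s', l) \<in> E\<^sup>*"
      if "l \<in> LB (nodeAt ch s (p @ [k]))" "l \<in> LB (nodeAt ch s' (p @ [k']))" for l
      using that reach_node_pos \<open>s \<in> U\<close> \<open>s' \<in> U\<close>
      by (auto simp: leaves_below_def intro: rtrancl_trans)
    then show ?thesis
      using U_eq_if_common_descendant[OF that] False by blast
  qed
  then show ?thesis
    unfolding leaves_at_def by blast
qed

lemma count_at_children: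
  assumes "p \<in> Pos"
  shows "(\<Sum>k<branching p. count_at N (p @ [k])) = count_at N p"
proof -
  have "count_at N p = (\<Sum>k<branching p. \<Sum>l\<in>leaves_at (p @ [k]). N l)"
    unfolding count_at_def leaves_at_children[OF assms]
    using leaves_at_children_disjoint[OF assms]
    by (intro sum.UNION_disjoint) (auto simp: finite_leaves_at)
  then show ?thesis
    by (simp add: count_at_def)
qed

lemma alpha_at_pos:
  assumes "\<alpha> > 0" "q \<in> node_pos"
  shows "alpha_at \<alpha> q > 0"
proof -
  have "card (LB (nodeAt ch s0 q)) > 0"
    using leaves_below_nonempty node_pos_in_V[OF s0_in_U assms(2)] finite_leaves_below
    by (simp add: card_gt_0_iff)
  then have "(\<Sum>s\<in>U. real (card (LB (nodeAt ch s q)))) > 0"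
    using finite_U s0_in_U by (intro sum_pos2[of U s0]) auto
  then show ?thesis
    unfolding alpha_at_def using assms(1) card_leaves_pos by simp
qed

lemma gamma_ratio_pos: "\<alpha> > 0 \<Longrightarrow> q \<in> node_pos \<Longrightarrow> gamma_ratio \<alpha> N q > 0"
  using alpha_at_pos by (simp add: gamma_ratio_def add_pos_nonneg)

lemma stage_factor_stage_lbl:
  assumes "p \<in> Pos"
  shows "stage_factor V ch st N \<alpha> (stage_lbl p) =
           (\<Prod>k<branching p. gamma_ratio \<alpha> N (p @ [k])) / gamma_ratio \<alpha> N p"
proof -
  have "(\<Sum>k<branching p. real (count_at N (p @ [k]))) = real (count_at N p)"
    using count_at_children[OF assms] by (metis of_nat_sum)
  then show ?thesis
    using stage_factor_eq[OF stage_arity_stage_lbl[OF assms]] alpha_jk_stage_lbl[OF assms]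
      n_count_stage_lbl[OF assms] alpha_at_children[OF assms]
    by (simp add: gamma_ratio_def)
qed

lemma sum_subleaf_list: "(\<Sum>k<length subleaf_list. f (subleaf_list ! k)) = (\<Sum>q\<in>subleaves. f q)"
  and prod_subleaf_list: "(\<Prod>k<length subleaf_list. g (subleaf_list ! k)) = (\<Prod>q\<in>subleaves. g q)"
  using bij_betw_nth[OF distinct_subleaf_list refl set_subleaf_list[symmetric]]
  by (simp_all add: sum.reindex_bij_betw prod.reindex_bij_betw)

lemma subleaf_list_nth: "k < length subleaf_list \<Longrightarrow> subleaf_list ! k \<in> subleaves"
  using set_subleaf_list nth_mem by blast

lemma stage_resize_u: "stage V' ch' st u = U"
  using situation_resize_iff U_not_removed by (auto simp: stage_def)

lemma stage_arity_resize_u: "stage_arity V' ch' st u = length subleaf_list"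
  using s0_in_U by (simp add: stage_arity_def stage_resize_u ch'_def flip: s0_def)

lemma leaves_below_resize_u:
  "s \<in> U \<Longrightarrow> k < length subleaf_list \<Longrightarrow> LB' (ch' s ! k) = LB (nodeAt ch s (subleaf_list ! k))"
  using leaves_below_resize subleaf_in_V' subleaf_list_nth by (simp add: ch'_def)

lemma alpha_jk_resize_u:
  "k < length subleaf_list \<Longrightarrow> alpha_jk V' ch' st \<alpha> u k = alpha_at \<alpha> (subleaf_list ! k)"
  by (simp add: alpha_jk_def alpha_at_def stage_resize_u leaves_resize leaves_below_resize_u)

lemma n_count_resize_u:
  "k < length subleaf_list \<Longrightarrow> n_count V' ch' st N u k = count_at N (subleaf_list ! k)"
proof -
  assume "k < length subleaf_list"
  then have "{l \<in> leaves V' ch'. \<exists>v\<in>stage V' ch' st u. l \<in> LB' (ch' v ! k)} =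
      leaves_at (subleaf_list ! k)"
    using leaves_below_subset
    by (auto simp: stage_resize_u leaves_resize leaves_below_resize_u leaves_at_def)
  then show ?thesis
    by (simp add: n_count_def count_at_def)
qed

lemma sum_alpha_at_subleaves: "(\<Sum>q\<in>subleaves. alpha_at \<alpha> q) = alpha_at \<alpha> []"
  using sum_telescope[OF finite_Pos Nil_in_Pos Pos_prefix_closed, of "alpha_at \<alpha>"] alpha_at_children
  by (simp add: subleaves_def)

lemma sum_count_at_subleaves: "(\<Sum>q\<in>subleaves. real (count_at N q)) = real (count_at N [])"
  using sum_telescope[OF finite_Pos Nil_in_Pos Pos_prefix_closed, of "\<lambda>q. real (count_at N q)"]
    count_at_children by (simp add: subleaves_def flip: of_nat_sum)

lemma stage_factor_resize_u:
  "stage_factor V' ch' st N \<alpha> u = (\<Prod>q\<in>subleaves. gamma_ratio \<alpha> N q) / gamma_ratio \<alpha> N []"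
proof -
  let ?a = "\<lambda>k. alpha_at \<alpha> (subleaf_list ! k)" and ?n = "\<lambda>k. count_at N (subleaf_list ! k)"
  let ?m = "length subleaf_list"
  have "stage_factor V' ch' st N \<alpha> u =
      Gamma (\<Sum>k<?m. ?a k) / Gamma ((\<Sum>k<?m. ?a k) + (\<Sum>k<?m. real (?n k))) *
      (\<Prod>k<?m. Gamma (?a k + real (?n k)) / Gamma (?a k))"
    by (rule stage_factor_eq[OF stage_arity_resize_u])
      (simp_all add: alpha_jk_resize_u n_count_resize_u)
  also have "(\<Sum>k<?m. ?a k) = alpha_at \<alpha> []"
    using sum_subleaf_list[of "alpha_at \<alpha>"] sum_alpha_at_subleaves by simp
  also have "(\<Sum>k<?m. real (?n k)) = real (count_at N [])"
    using sum_subleaf_list[of "\<lambda>q. real (count_at N q)"] sum_count_at_subleaves by simp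
  also have "(\<Prod>k<?m. Gamma (?a k + real (?n k)) / Gamma (?a k)) = (\<Prod>q\<in>subleaves. gamma_ratio \<alpha> N q)"
    unfolding gamma_ratio_def by (rule prod_subleaf_list)
  finally show ?thesis
    by (simp add: gamma_ratio_def)
qed

lemma finite_stage_labels: "finite (stage_labels V ch st)"
  unfolding stage_labels_def
  by (intro finite_imageI finite_subset[OF _ finite_V]) (auto simp: is_situation_def)

lemma stage_lbl_Pos_subset: "stage_lbl ` Pos \<subseteq> stage_labels V ch st"
  using Pos_situation[OF s0_in_U] by (auto simp: stage_labels_def stage_lbl_def is_situation_def)

lemma u_in_stage_lbl_Pos: "u \<in> stage_lbl ` Pos"
  using stage_lbl_Nil Nil_in_Pos by (metis imageI)

lemma stage_labels_resize:
  "stage_labels V' ch' st = insert u (stage_labels V ch st - stage_lbl ` Pos)"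
proof
  show "stage_labels V' ch' st \<subseteq> insert u (stage_labels V ch st - stage_lbl ` Pos)"
  proof
    fix j assume "j \<in> stage_labels V' ch' st"
    then obtain v where v: "is_situation V ch v" "v \<notin> removed" "j = st v"
      unfolding stage_labels_def using situation_resize_iff by blast
    have "j = u" if p: "p \<in> Pos" "j = stage_lbl p" for p
    proof (cases "p = []")
      case True
      then show ?thesis
        using p stage_lbl_Nil by simp
    next
      case False
      then obtain s where "s \<in> U" "v = nodeAt ch s p"
        using situation_at_stage_lbl[OF v(1) p(1) False] v(3) p(2) by blast
      then have "v \<in> removed"
        using p(1) False by (auto simp: removed_def)
      with v(2) show ?thesis
        by blast
    qed
    moreover have "j \<in> stage_labels V ch st"
      unfolding stage_labels_def using v(1,3) by blast
    ultimately show "j \<in> insert u (stage_labels V ch st - stage_lbl ` Pos)"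
      by blast
  qed
  show "insert u (stage_labels V ch st - stage_lbl ` Pos) \<subseteq> stage_labels V' ch' st"
  proof
    fix j assume j: "j \<in> insert u (stage_labels V ch st - stage_lbl ` Pos)"
    obtain v where v: "is_situation V ch v" "st v = j" "v \<notin> removed"
    proof (cases "j = u")
      case True
      then show ?thesis
        using that[of s0] s0_in_U U_not_removed by (simp add: stage_def)
    next
      case False
      then obtain v where "is_situation V ch v" "st v = j"
        using j by (auto simp: stage_labels_def)
      moreover have "v \<notin> removed"
        using removed_situation j False \<open>st v = j\<close> by blast
      ultimately show ?thesis
        using that by blast
    qed
    then show "j \<in> stage_labels V' ch' st"
      unfolding stage_labels_def using situation_resize_iff by blast
  qed
qed

lemma stage_factor_resize_other:
  assumes j: "j \<in> stage_labels V ch st - stage_lbl ` Pos"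
  shows "stage_factor V' ch' st N \<alpha> j = stage_factor V ch st N \<alpha> j"
proof (rule stage_factor_cong)
  have not_removed: "v \<notin> removed" if "v \<in> stage V ch st j" for v
    using removed_situation j that by (auto simp: stage_def)
  have not_U: "v \<notin> U" if "v \<in> stage V ch st j" for v
    using that j u_in_stage_lbl_Pos by (auto simp: stage_def)
  show stage: "stage V' ch' st j = stage V ch st j"
    using situation_resize_iff not_removed by (auto simp: stage_def)
  show "leaves V' ch' = leaves V ch"
    by (rule leaves_resize)
  obtain v0 where v0: "v0 \<in> stage V ch st j"
    using j by (auto simp: stage_labels_def stage_def)
  show "stage_arity V' ch' st j = stage_arity V ch st j"
  proof -
    have "(SOME v. v \<in> stage V ch st j) \<in> stage V ch st j"
      using v0 by (rule someI)
    then show ?thesis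
      unfolding stage_arity_def stage using not_U by (simp add: ch'_def)
  qed
  show "LB' (ch' v ! k) = LB (ch v ! k)"
    if "v \<in> stage V ch st j" "k < stage_arity V ch st j" for v k
  proof -
    have "v \<in> V'" "v \<notin> U"
      using that(1) not_removed not_U by (auto simp: V'_def stage_def is_situation_def)
    moreover have "ch v ! k \<in> set (ch v)"
      using that stage_arity_eq_length[OF that(1)] by simp
    ultimately show ?thesis
      using child_in_V' leaves_below_resize by (simp add: ch'_def)
  qed
qed

lemma BDepu_resize:
  assumes "\<alpha> > 0"
  shows "BDepu V r ch st N \<alpha> = BDepu V' r ch' st N \<alpha>"
proof -
  let ?L = "stage_labels V ch st - stage_lbl ` Pos"
  let ?G = "gamma_ratio \<alpha> N"
  have "BDepu V r ch st N \<alpha> =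
      (\<Prod>j\<in>?L. stage_factor V ch st N \<alpha> j) * (\<Prod>j\<in>stage_lbl ` Pos. stage_factor V ch st N \<alpha> j)"
    unfolding BDepu_eq_prod_stage_factor
    by (rule prod.subset_diff[OF stage_lbl_Pos_subset finite_stage_labels])
  also have "(\<Prod>j\<in>stage_lbl ` Pos. stage_factor V ch st N \<alpha> j) =
      (\<Prod>p\<in>Pos. (\<Prod>k<branching p. ?G (p @ [k])) / ?G p)"
    by (simp add: prod.reindex[OF inj_on_stage_lbl] stage_factor_stage_lbl)
  also have "\<dots> = (\<Prod>q\<in>subleaves. ?G q) / ?G []"
    unfolding subleaves_def
  proof (rule prod_telescope[OF finite_Pos Nil_in_Pos Pos_prefix_closed])
    show "?G p \<noteq> 0" if "p \<in> Pos" for p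
      using gamma_ratio_pos[OF assms, of p N] Pos_subset_node_pos that by auto
  qed
  also have "\<dots> = stage_factor V' ch' st N \<alpha> u"
    by (rule stage_factor_resize_u[symmetric])
  also have "(\<Prod>j\<in>?L. stage_factor V ch st N \<alpha> j) = (\<Prod>j\<in>?L. stage_factor V' ch' st N \<alpha> j)"
    using stage_factor_resize_other by simp
  finally show ?thesis
    unfolding BDepu_eq_prod_stage_factor[of V' r ch'] stage_labels_resize
    using finite_stage_labels u_in_stage_lbl_Pos by (simp add: mult.commute)
qed

end

theorem lemma5:
  fixes V :: "'v set" and r :: 'v and ch :: "'v \<Rightarrow> 'v list" and st :: "'v \<Rightarrow> 's"
    and u :: 's and T :: "'v \<Rightarrow> nat list set" and \<alpha> :: real and N :: "'v \<Rightarrow> nat"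
  assumes "staged_tree V r ch st"
    and "square_free V ch st"
    and "u \<in> stage_labels V ch st"
    and "cond_saturated V ch st u T"
    and "\<alpha> > 0"
  shows "BDepu V r ch st N \<alpha> =
         BDepu (resize_V V ch st u T) r (resize_ch V ch st u T) st N \<alpha>"
proof -
  interpret resize_setting V r ch st u T
    using assms(1-4) by unfold_locales (simp_all add: staged_tree_def)
  show ?thesis
    unfolding resize_V_eq resize_ch_eq using BDepu_resize[OF assms(5)] .
qed

end
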